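(* Let $G$ be a graph with minimum degree at least $2$ and maximum degree at most $4$, let $k$ be an integer, and write $r(G,k) = k - |V(G)|/3$. Let $C,H$ be a general crown in $G$ such that $G-C-H$ has minimum degree at least $2$, and let $(G',k')$ be obtained as follows: (i) if $C,H$ is a proper crown, $G' = G - (C\cup H)$ and $k' = k-|H|$; (ii) if $C,H$ is an almost crown and $H$ is not an independent set, $G' = G-(C\cup H)$ and $k' = k-|H|$; (iii) if $C,H$ is an almost crown and $H$ is an independent set, $G'$ is obtained from $G$ by merging the vertices of $C\cup H$ into a single vertex, and $k' = k-(|H|-1)$. Then in each case $r(G',k') \le r(G,k)$.
   Context: All graphs are finite, simple and undirected. A general crown in $G$ is a pair $C,H$ of disjoint nonempty subsets of $V(G)$ such that every vertex of $C$ has degree $0$ in $G-H$ (i.e., all neighbors of vertices of $C$ lie in $H$). A proper crown is a general crown $C,H$ for which there is a matching between $C$ and $H$ of size $|H|$. An almost crown is a general crown $C,H$ with $|H| = |C|+1$ and $|N(S)|\ge |S|+1$ for every nonempty $S\subseteq C$, where $N(S) = (\bigcup_{v\in S}N(v))\setminus S$. For a set $S$ of vertices, $G-S$ is the graph obtained by deleting $S$ and all incident edges. Merging a set $S$ of vertices means deleting $S$ and adding a new vertex $v^*$ adjacent exactly to those remaining vertices that had a neighbor in $S$. *)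

theory Defs
  imports Complex_Main
begin

type_synonym 'a graph = "'a set \<times> 'a set set"

definition verts :: "'a graph \<Rightarrow> 'a set" where "verts G = fst G"
definition edges :: "'a graph \<Rightarrow> 'a set set" where "edges G = snd G"

definition simple_graph :: "'a graph \<Rightarrow> bool" where
  "simple_graph G \<longleftrightarrow> finite (verts G) \<and>
     (\<forall>e\<in>edges G. \<exists>u v. e = {u, v} \<and> u \<noteq> v \<and> u \<in> verts G \<and> v \<in> verts G)"

definition nbrs :: "'a graph \<Rightarrow> 'a \<Rightarrow> 'a set" where
  "nbrs G v = {u \<in> verts G. {u, v} \<in> edges G}"

definition degree :: "'a graph \<Rightarrow> 'a \<Rightarrow> nat" where
  "degree G v = card (nbrs G v)"

definition min_degree_ge :: "'a graph \<Rightarrow> nat \<Rightarrow> bool" where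
  "min_degree_ge G d \<longleftrightarrow> (\<forall>v\<in>verts G. d \<le> degree G v)"

definition max_degree_le :: "'a graph \<Rightarrow> nat \<Rightarrow> bool" where
  "max_degree_le G d \<longleftrightarrow> (\<forall>v\<in>verts G. degree G v \<le> d)"

definition nbr_set :: "'a graph \<Rightarrow> 'a set \<Rightarrow> 'a set" where
  "nbr_set G S = (\<Union>v\<in>S. nbrs G v) - S"

definition del_verts :: "'a graph \<Rightarrow> 'a set \<Rightarrow> 'a graph" where
  "del_verts G S = (verts G - S, {e \<in> edges G. e \<inter> S = {}})"

text \<open>Merge S into a new vertex w (w is assumed not to be a vertex of G).\<close>
definition merge_verts :: "'a graph \<Rightarrow> 'a set \<Rightarrow> 'a \<Rightarrow> 'a graph" where
  "merge_verts G S w =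
     ((verts G - S) \<union> {w},
      {e \<in> edges G. e \<inter> S = {}} \<union>
      {{u, w} | u. u \<in> verts G - S \<and> (\<exists>s\<in>S. {u, s} \<in> edges G)})"

definition independent_set :: "'a graph \<Rightarrow> 'a set \<Rightarrow> bool" where
  "independent_set G S \<longleftrightarrow> (\<forall>u\<in>S. \<forall>v\<in>S. {u, v} \<notin> edges G)"

definition general_crown :: "'a graph \<Rightarrow> 'a set \<Rightarrow> 'a set \<Rightarrow> bool" where
  "general_crown G C H \<longleftrightarrow> C \<subseteq> verts G \<and> H \<subseteq> verts G \<and> C \<inter> H = {} \<and>
     C \<noteq> {} \<and> H \<noteq> {} \<and> (\<forall>v\<in>C. nbrs G v \<subseteq> H)"

definition is_matching :: "'a graph \<Rightarrow> 'a set set \<Rightarrow> bool" where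
  "is_matching G M \<longleftrightarrow> M \<subseteq> edges G \<and> (\<forall>e1\<in>M. \<forall>e2\<in>M. e1 \<noteq> e2 \<longrightarrow> e1 \<inter> e2 = {})"

definition proper_crown :: "'a graph \<Rightarrow> 'a set \<Rightarrow> 'a set \<Rightarrow> bool" where
  "proper_crown G C H \<longleftrightarrow> general_crown G C H \<and>
     (\<exists>M. is_matching G M \<and> (\<forall>e\<in>M. \<exists>c\<in>C. \<exists>h\<in>H. e = {c, h}) \<and> card M = card H)"

definition almost_crown :: "'a graph \<Rightarrow> 'a set \<Rightarrow> 'a set \<Rightarrow> bool" where
  "almost_crown G C H \<longleftrightarrow> general_crown G C H \<and> card H = card C + 1 \<and>
     (\<forall>S. S \<subseteq> C \<and> S \<noteq> {} \<longrightarrow> card (nbr_set G S) \<ge> card S + 1)"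

definition r_measure :: "'a graph \<Rightarrow> int \<Rightarrow> real" where
  "r_measure G k = real_of_int k - real (card (verts G)) / 3"

end

theory Submission
  imports Defs
begin

text \<open>Each vertex of \<open>C\<close> has at least two neighbours, all in \<open>H\<close>, and each vertex of \<open>H\<close>
  has at most four neighbours, so counting the edges between \<open>C\<close> and \<open>H\<close> gives
  \<open>|C| \<le> 2|H|\<close>. Deleting \<open>C \<union> H\<close> therefore removes at most \<open>3|H|\<close> vertices, which pays for
  lowering \<open>k\<close> by \<open>|H|\<close>, whatever the crown looks like. Merging an almost crown turns
  \<open>2|C| + 1\<close> vertices into one while \<open>k\<close> drops by \<open>|H| - 1 = |C|\<close>.\<close>

lemma sum_card_Collect_swap:
  assumes "finite A" "finite B"
  shows "(\<Sum>a\<in>A. card {b\<in>B. R a b}) = (\<Sum>b\<in>B. card {a\<in>A. R a b})"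
proof -
  have card_eq: "card {x\<in>X. P x} = (\<Sum>x\<in>X. if P x then 1 else 0)" if "finite X" for X P
    using that by (simp add: sum.If_cases Collect_conj_eq Int_commute)
  show ?thesis using assms by (simp add: card_eq sum.swap[of _ A])
qed

lemma general_crown_card_le:
  fixes G :: "'a graph"
  assumes "finite (verts G)" "min_degree_ge G a" "max_degree_le G b" "general_crown G C H"
  shows "a * card C \<le> b * card H"
proof -
  have CV: "C \<subseteq> verts G" and HV: "H \<subseteq> verts G" and nbrs_C: "\<forall>c\<in>C. nbrs G c \<subseteq> H"
    using assms(4) by (auto simp: general_crown_def)
  have "finite C" "finite H" using assms(1) CV HV finite_subset by auto
  define adj where "adj c h \<longleftrightarrow> {h, c} \<in> edges G" for c h
  have nbrs_C_eq: "nbrs G c = {h\<in>H. adj c h}" if "c \<in> C" for c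
    using nbrs_C HV that by (auto simp: nbrs_def adj_def)
  have "a * card C = (\<Sum>c\<in>C. a)" by simp
  also have "\<dots> \<le> (\<Sum>c\<in>C. card (nbrs G c))"
    using assms(2) CV by (intro sum_mono) (auto simp: min_degree_ge_def degree_def)
  also have "\<dots> = (\<Sum>c\<in>C. card {h\<in>H. adj c h})"
    using nbrs_C_eq by simp
  also have "\<dots> = (\<Sum>h\<in>H. card {c\<in>C. adj c h})"
    using \<open>finite C\<close> \<open>finite H\<close> by (rule sum_card_Collect_swap)
  also have "\<dots> \<le> (\<Sum>h\<in>H. card (nbrs G h))"
  proof (rule sum_mono)
    fix h
    have "{c\<in>C. adj c h} \<subseteq> nbrs G h" using CV by (auto simp: nbrs_def adj_def insert_commute)
    moreover have "finite (nbrs G h)" using assms(1) by (simp add: nbrs_def)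
    ultimately show "card {c\<in>C. adj c h} \<le> card (nbrs G h)" by (rule card_mono[rotated])
  qed
  also have "\<dots> \<le> (\<Sum>h\<in>H. b)"
    using assms(3) HV by (intro sum_mono) (auto simp: max_degree_le_def degree_def)
  finally show ?thesis by (simp add: mult.commute)
qed

lemma r_measure_del_verts_le:
  assumes "finite (verts G)" "S \<subseteq> verts G" "card S \<le> 3 * j"
  shows "r_measure (del_verts G S) (k - int j) \<le> r_measure G k"
proof -
  have "card (verts (del_verts G S)) = card (verts G) - card S"
    using assms(1,2) by (simp add: del_verts_def verts_def card_Diff_subset finite_subset)
  moreover have "card S \<le> card (verts G)" using assms(1,2) by (rule card_mono)
  ultimately show ?thesis using assms(3) by (simp add: r_measure_def of_nat_diff field_simps)
qed

lemma r_measure_merge_verts_le: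
  assumes "finite (verts G)" "S \<subseteq> verts G" "w \<notin> verts G" "card S \<le> 3 * j + 1"
  shows "r_measure (merge_verts G S w) (k - int j) \<le> r_measure G k"
proof -
  have "card (verts (merge_verts G S w)) = card (verts G) - card S + 1"
    using assms(1-3) by (simp add: merge_verts_def verts_def card_Diff_subset finite_subset)
  moreover have "card S \<le> card (verts G)" using assms(1,2) by (rule card_mono)
  ultimately show ?thesis using assms(4) by (simp add: r_measure_def of_nat_diff field_simps)
qed

theorem lemma2:
  fixes G :: "'a graph" and C H :: "'a set" and k :: int
  assumes "simple_graph G"
    and "min_degree_ge G 2"
    and "max_degree_le G 4"
    and "general_crown G C H"
    and "min_degree_ge (del_verts G (C \<union> H)) 2"
  shows "(proper_crown G C H \<longrightarrow>
            r_measure (del_verts G (C \<union> H)) (k - int (card H)) \<le> r_measure G k)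
       \<and> (almost_crown G C H \<and> \<not> independent_set G H \<longrightarrow>
            r_measure (del_verts G (C \<union> H)) (k - int (card H)) \<le> r_measure G k)
       \<and> (\<forall>w. w \<notin> verts G \<longrightarrow> almost_crown G C H \<and> independent_set G H \<longrightarrow>
            r_measure (merge_verts G (C \<union> H) w) (k - (int (card H) - 1)) \<le> r_measure G k)"
proof -
  have fin: "finite (verts G)" using assms(1) by (simp add: simple_graph_def)
  have CH_verts: "C \<union> H \<subseteq> verts G" and "C \<inter> H = {}"
    using assms(4) by (auto simp: general_crown_def)
  have card_CH: "card (C \<union> H) = card C + card H"
    using fin CH_verts \<open>C \<inter> H = {}\<close> by (intro card_Un_disjoint) (auto intro: finite_subset)
  have "2 * card C \<le> 4 * card H" using general_crown_card_le[OF fin assms(2-4)] .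
  then have deletion: "r_measure (del_verts G (C \<union> H)) (k - int (card H)) \<le> r_measure G k"
    using fin CH_verts card_CH by (intro r_measure_del_verts_le) auto
  have merging: "r_measure (merge_verts G (C \<union> H) w) (k - (int (card H) - 1)) \<le> r_measure G k"
    if "w \<notin> verts G" "almost_crown G C H" for w
  proof -
    have "card H = card C + 1" using that(2) by (simp add: almost_crown_def)
    then have "k - (int (card H) - 1) = k - int (card C)" by simp
    with r_measure_merge_verts_le[OF fin CH_verts that(1), of "card C" k]
    show ?thesis using card_CH \<open>card H = card C + 1\<close> by simp
  qed
  show ?thesis using deletion merging by blast
qed

end
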